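(* Let $\Theta\subseteq\mathcal B_R^d(0)$ with $0\in\Theta$, suppose Assumptions 1 and 2 hold with constants $L,B>0$, and let $g:\Theta\times\mathcal Z\to\Theta$ be such that $g(\cdot\,;z)$ is $\gamma$-contractive on $\Theta$ for every $z\in\mathcal Z$, for some $\gamma\in(0,1)$. Let $T:=\max\left\{\left\lceil\frac{\log(2LRn)}{\log(1/\gamma)}\right\rceil,0\right\}$. Then for any fixed $\theta^{(0)}\in\Theta$, $t\ge0$ and $i_1,\dots,i_t\in[n]$, the iterate $\theta^{(t)}:=g_{i_t}\circ\cdots\circ g_{i_1}(\theta^{(0)})$ satisfies $$\left|\mathbb E_{z_1,\dots,z_n}\big[\hat F(\theta^{(t)})-F(\theta^{(t)})\big]\right|\le\frac{BT+1}{n}.$$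
   Context: $z_1,\dots,z_n$ i.i.d. from a distribution $\mu$ on $\mathcal Z$, $Z\sim\mu$; $f:\Theta\times\mathcal Z\to\mathbb R$, $F(\theta):=\mathbb E_Z[f(\theta;Z)]$, $\hat F(\theta):=\frac1n\sum_{i=1}^nf(\theta;z_i)$; $g_i:=g(\cdot\,;z_i)$. $\gamma$-contractive: $\|g(\theta;z)-g(\theta';z)\|\le\gamma\|\theta-\theta'\|$. Assumption 1 (constant $L$): there is $h_0:\Theta\to\mathbb R$ with $|f(\theta;z)-h_0(\theta)-(f(\theta';z)-h_0(\theta'))|\le L\|\theta-\theta'\|$ for all $\theta,\theta'\in\Theta$, $z$. Assumption 2 (constant $B$): $\sup_zf(\theta;z)-\inf_zf(\theta;z)\le B$ for all $\theta\in\Theta$. *)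

theory Defs
  imports "HOL-Probability.Probability"
begin

text \<open>The iterate theta_t = g_{i_t} o ... o g_{i_1} (theta_0), where the sample is
  omega :: nat => 'b (omega i = z_i) and the index sequence is the list is = [i_1,...,i_t].\<close>
definition iterate :: "('a \<Rightarrow> 'b \<Rightarrow> 'a) \<Rightarrow> 'a \<Rightarrow> nat list \<Rightarrow> (nat \<Rightarrow> 'b) \<Rightarrow> 'a" where
  "iterate g \<theta>0 is \<omega> = foldl (\<lambda>\<theta> i. g \<theta> (\<omega> i)) \<theta>0 is"

definition pop_risk :: "'b measure \<Rightarrow> ('a \<Rightarrow> 'b \<Rightarrow> real) \<Rightarrow> 'a \<Rightarrow> real" where
  "pop_risk M f \<theta> = (\<integral>z. f \<theta> z \<partial>M)"

definition emp_risk :: "nat \<Rightarrow> ('a \<Rightarrow> 'b \<Rightarrow> real) \<Rightarrow> (nat \<Rightarrow> 'b) \<Rightarrow> 'a \<Rightarrow> real" where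
  "emp_risk n f \<omega> \<theta> = (\<Sum>i<n. f \<theta> (\<omega> i)) / real n"

end

theory Submission
  imports Defs
begin

text \<open>
  The expected generalization gap is the average over
  \<open>i\<close> of \<open>\<bbbE>[f(\<theta>\<^sub>t; z\<^sub>i) - F(\<theta>\<^sub>t)]\<close>. For such \<open>i\<close>, integrate out \<open>z\<^sub>i\<close> first: with
  \<open>u(y) = \<theta>\<^sub>t\<close> evaluated at \<open>z\<^sub>i = y\<close>, the centred loss has mean zero for fixed \<open>\<theta>\<close>, so
  \<open>\<bbbE>\<^sub>y[f(u(y); y) - F(u(y))] = \<bbbE>\<^sub>y\<^sub>,\<^sub>z[a(y,z)]\<close> with
  \<open>a(y,z) = f(u(y); y) - F(u(y)) - f(u(z); y) + F(u(z))\<close>; in \<open>a(y,z) + a(z,y)\<close> the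
  population terms cancel and Assumption 1 bounds the rest by \<open>2L\<delta>\<close>. Each of the
  at most \<open>T\<close> remaining indices contributes at most \<open>B\<close> by Assumption 2.
\<close>

lemma (in prob_space) abs_integral_le_const:
  fixes h :: "'a \<Rightarrow> real"
  assumes bound: "\<And>x. x \<in> space M \<Longrightarrow> \<bar>h x\<bar> \<le> c"
  shows "\<bar>\<integral>x. h x \<partial>M\<bar> \<le> c"
proof (cases "integrable M h")
  case True
  have "-c \<le> h x \<and> h x \<le> c" if "x \<in> space M" for x
    using bound[OF that] by arith
  then have "(\<integral>x. h x \<partial>M) \<le> c" "-c \<le> (\<integral>x. h x \<partial>M)"
    using True by (auto intro!: integral_le_const integral_ge_const)
  then show ?thesis by linarith
next
  case False
  obtain x where "x \<in> space M" using not_empty by blast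
  then show ?thesis using bound[of x] False by (simp add: not_integrable_integral_eq)
qed

lemma (in prob_space) abs_integral_le_of_symmetric_bound:
  fixes a :: "'a \<times> 'a \<Rightarrow> real"
  assumes bound: "\<And>y z. y \<in> space M \<Longrightarrow> z \<in> space M \<Longrightarrow> \<bar>a (y, z) + a (z, y)\<bar> \<le> 2 * c"
  shows "\<bar>integral\<^sup>L (M \<Otimes>\<^sub>M M) a\<bar> \<le> c"
proof -
  interpret P: pair_prob_space M M by unfold_locales
  obtain x where "x \<in> space M" using not_empty by blast
  then have c_nonneg: "c \<ge> 0" using bound[of x x] by simp
  show ?thesis
  proof (cases "integrable (M \<Otimes>\<^sub>M M) a")
    case True
    have swap_int: "integrable (M \<Otimes>\<^sub>M M) (\<lambda>(y, z). a (z, y))"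
      using P.integrable_product_swap[OF True] .
    have "(\<integral>(y, z). a (z, y) \<partial>(M \<Otimes>\<^sub>M M)) = integral\<^sup>L (M \<Otimes>\<^sub>M M) a"
      using P.integral_product_swap[OF borel_measurable_integrable[OF True]] .
    then have "2 * integral\<^sup>L (M \<Otimes>\<^sub>M M) a = (\<integral>p. a p + (case p of (y, z) \<Rightarrow> a (z, y)) \<partial>(M \<Otimes>\<^sub>M M))"
      using True swap_int by simp
    also have "\<bar>\<dots>\<bar> \<le> 2 * c"
      using bound by (intro P.abs_integral_le_const) (auto simp: space_pair_measure)
    finally show ?thesis by simp
  next
    case False
    then show ?thesis using c_nonneg by (simp add: not_integrable_integral_eq)
  qed
qed

lemma iterate_Nil [simp]: "iterate g \<theta> [] \<omega> = \<theta>"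
  by (simp add: iterate_def)

lemma iterate_Cons [simp]: "iterate g \<theta> (i # xs) \<omega> = iterate g (g \<theta> (\<omega> i)) xs \<omega>"
  by (simp add: iterate_def)

lemma iterate_append: "iterate g \<theta> (xs @ ys) \<omega> = iterate g (iterate g \<theta> xs \<omega>) ys \<omega>"
  by (simp add: iterate_def)

lemma iterate_cong: "(\<And>j. j \<in> set xs \<Longrightarrow> \<omega> j = \<omega>' j) \<Longrightarrow> iterate g \<theta> xs \<omega> = iterate g \<theta> xs \<omega>'"
  by (induction xs arbitrary: \<theta>) auto

lemma iterate_in:
  assumes "\<And>\<theta> z. \<theta> \<in> \<Theta> \<Longrightarrow> z \<in> S \<Longrightarrow> g \<theta> z \<in> \<Theta>"
    and "\<theta> \<in> \<Theta>" and "\<And>j. j \<in> set xs \<Longrightarrow> \<omega> j \<in> S"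
  shows "iterate g \<theta> xs \<omega> \<in> \<Theta>"
  using assms(2,3) by (induction xs arbitrary: \<theta>) (auto intro: assms(1))

lemma iterate_contraction:
  fixes g :: "'a::real_normed_vector \<Rightarrow> 'b \<Rightarrow> 'a"
  assumes maps: "\<And>\<theta> z. \<theta> \<in> \<Theta> \<Longrightarrow> z \<in> S \<Longrightarrow> g \<theta> z \<in> \<Theta>"
    and contr: "\<And>\<theta> \<theta>' z. \<theta> \<in> \<Theta> \<Longrightarrow> \<theta>' \<in> \<Theta> \<Longrightarrow> z \<in> S \<Longrightarrow>
                  norm (g \<theta> z - g \<theta>' z) \<le> \<gamma> * norm (\<theta> - \<theta>')"
    and "\<gamma> \<ge> 0" and "\<theta> \<in> \<Theta>" "\<theta>' \<in> \<Theta>" and "\<And>j. j \<in> set xs \<Longrightarrow> \<omega> j \<in> S"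
  shows "norm (iterate g \<theta> xs \<omega> - iterate g \<theta>' xs \<omega>) \<le> \<gamma> ^ length xs * norm (\<theta> - \<theta>')"
  using assms(4-)
proof (induction xs arbitrary: \<theta> \<theta>')
  case Nil
  then show ?case by simp
next
  case (Cons j xs)
  have "norm (iterate g \<theta> (j # xs) \<omega> - iterate g \<theta>' (j # xs) \<omega>)
      \<le> \<gamma> ^ length xs * norm (g \<theta> (\<omega> j) - g \<theta>' (\<omega> j))"
    using Cons by (simp add: maps)
  also have "\<dots> \<le> \<gamma> ^ length xs * (\<gamma> * norm (\<theta> - \<theta>'))"
    using Cons.prems \<open>\<gamma> \<ge> 0\<close> by (intro mult_left_mono contr) auto
  finally show ?case by (simp add: mult.assoc mult.left_commute)
qed

lemma iterate_forgets_early_samples: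
  fixes g :: "'a::real_normed_vector \<Rightarrow> 'b \<Rightarrow> 'a"
  assumes maps: "\<And>\<theta> z. \<theta> \<in> \<Theta> \<Longrightarrow> z \<in> S \<Longrightarrow> g \<theta> z \<in> \<Theta>"
    and contr: "\<And>\<theta> \<theta>' z. \<theta> \<in> \<Theta> \<Longrightarrow> \<theta>' \<in> \<Theta> \<Longrightarrow> z \<in> S \<Longrightarrow>
                  norm (g \<theta> z - g \<theta>' z) \<le> \<gamma> * norm (\<theta> - \<theta>')"
    and "\<gamma> \<ge> 0" and ball: "\<Theta> \<subseteq> cball 0 R" and "\<theta> \<in> \<Theta>"
    and \<omega>: "\<And>j. j \<in> set xs \<Longrightarrow> \<omega> j \<in> S" and \<omega>': "\<And>j. j \<in> set xs \<Longrightarrow> \<omega>' j \<in> S"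
    and late_agree: "\<And>j. j \<in> set (drop (length xs - T) xs) \<Longrightarrow> \<omega>' j = \<omega> j"
  shows "norm (iterate g \<theta> xs \<omega> - iterate g \<theta> xs \<omega>') \<le> \<gamma> ^ T * (2 * R)"
proof -
  define k where "k = length xs - T"
  define a where "a = iterate g \<theta> (take k xs) \<omega>"
  define b where "b = iterate g \<theta> (take k xs) \<omega>'"
  have ab: "a \<in> \<Theta>" "b \<in> \<Theta>"
    unfolding a_def b_def using \<omega> \<omega>' \<open>\<theta> \<in> \<Theta>\<close>
    by (auto intro!: iterate_in[OF maps] dest: in_set_takeD)
  have split: "xs = take k xs @ drop k xs" by simp
  have "iterate g \<theta> xs \<omega> = iterate g a (drop k xs) \<omega>"
    unfolding a_def by (subst split) (simp only: iterate_append)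
  moreover have "iterate g \<theta> xs \<omega>' = iterate g b (drop k xs) \<omega>"
  proof -
    have "iterate g \<theta> xs \<omega>' = iterate g b (drop k xs) \<omega>'"
      unfolding b_def by (subst split) (simp only: iterate_append)
    also have "\<dots> = iterate g b (drop k xs) \<omega>"
      using late_agree unfolding k_def by (rule iterate_cong)
    finally show ?thesis .
  qed
  moreover have "\<And>j. j \<in> set (drop k xs) \<Longrightarrow> \<omega> j \<in> S"
    using \<omega> by (meson in_set_dropD)
  ultimately have contracted: "norm (iterate g \<theta> xs \<omega> - iterate g \<theta> xs \<omega>')
      \<le> \<gamma> ^ length (drop k xs) * norm (a - b)"
    using iterate_contraction[where g=g and S=S and \<Theta>=\<Theta> and xs="drop k xs", OF maps contr \<open>\<gamma> \<ge> 0\<close> ab]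
    by simp
  show ?thesis
  proof (cases "T \<le> length xs")
    case True
    have "norm (a - b) \<le> 2 * R"
      proof -
      have "norm a \<le> R" "norm b \<le> R" using ab ball by auto
      then show ?thesis using norm_triangle_ineq4[of a b] by linarith
    qed
    then have "\<gamma> ^ T * norm (a - b) \<le> \<gamma> ^ T * (2 * R)"
      using \<open>\<gamma> \<ge> 0\<close> by (simp add: mult_left_mono)
    with contracted True show ?thesis
      unfolding k_def by simp
  next
    case False
    then have "a = b"
      unfolding a_def b_def k_def by simp
    moreover have "R \<ge> 0"
      using ab ball by (meson mem_cball_0 norm_ge_zero order_trans subsetD)
    ultimately show ?thesis
      using contracted \<open>\<gamma> \<ge> 0\<close> by simp
  qed
qed

lemma measurable_iterate:
  assumes g: "(\<lambda>(\<theta>, z). g \<theta> z) \<in> borel \<Otimes>\<^sub>M M \<rightarrow>\<^sub>M borel"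
  shows "set xs \<subseteq> I \<Longrightarrow> iterate g \<theta> xs \<in> PiM I (\<lambda>_. M) \<rightarrow>\<^sub>M borel"
proof (induction xs rule: rev_induct)
  case Nil
  then show ?case by simp
next
  case (snoc j xs)
  then have "(\<lambda>\<omega>. (iterate g \<theta> xs \<omega>, \<omega> j)) \<in> PiM I (\<lambda>_. M) \<rightarrow>\<^sub>M borel \<Otimes>\<^sub>M M"
    using measurable_component_singleton[of j I "\<lambda>_. M"] by (intro measurable_Pair) auto
  from measurable_compose[OF this g] show ?case
    by (simp add: iterate_append)
qed

lemma power_ceiling_log_le:
  fixes c \<gamma> :: real
  assumes "c > 0" "0 < \<gamma>" "\<gamma> < 1"
  shows "\<gamma> ^ nat (max \<lceil>ln c / ln (1 / \<gamma>)\<rceil> 0) \<le> 1 / c"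
proof -
  define s where "s = ln c / ln (1 / \<gamma>)"
  have "s \<le> real (nat (max \<lceil>s\<rceil> 0))"
    by linarith
  then have "\<gamma> ^ nat (max \<lceil>s\<rceil> 0) \<le> \<gamma> powr s"
    using assms by (simp add: powr_realpow[symmetric] powr_mono')
  also have "\<gamma> powr s = exp (- ln c)"
    using assms by (simp add: powr_def s_def ln_div)
  also have "\<dots> = 1 / c"
    using assms by (simp add: exp_minus inverse_eq_divide)
  finally show ?thesis unfolding s_def .
qed

locale contractive_loss_setting = prob_space M
  for M :: "'b measure" and f :: "'a::real_normed_vector \<Rightarrow> 'b \<Rightarrow> real" and h0 :: "'a \<Rightarrow> real"
    and g :: "'a \<Rightarrow> 'b \<Rightarrow> 'a" and \<Theta> :: "'a set" and R L B \<gamma> :: real +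
  assumes Theta_ball: "\<Theta> \<subseteq> cball 0 R"
    and shifted_lipschitz: "\<And>\<theta> \<theta>' z. \<theta> \<in> \<Theta> \<Longrightarrow> \<theta>' \<in> \<Theta> \<Longrightarrow> z \<in> space M \<Longrightarrow>
          \<bar>f \<theta> z - h0 \<theta> - (f \<theta>' z - h0 \<theta>')\<bar> \<le> L * norm (\<theta> - \<theta>')"
    and L_nonneg: "L \<ge> 0"
    and bounded_oscillation: "\<And>\<theta> z z'. \<theta> \<in> \<Theta> \<Longrightarrow> z \<in> space M \<Longrightarrow> z' \<in> space M \<Longrightarrow>
          f \<theta> z - f \<theta> z' \<le> B"
    and g_maps: "\<And>\<theta> z. \<theta> \<in> \<Theta> \<Longrightarrow> z \<in> space M \<Longrightarrow> g \<theta> z \<in> \<Theta>"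
    and gamma_nonneg: "\<gamma> \<ge> 0"
    and contractive: "\<And>\<theta> \<theta>' z. \<theta> \<in> \<Theta> \<Longrightarrow> \<theta>' \<in> \<Theta> \<Longrightarrow> z \<in> space M \<Longrightarrow>
          norm (g \<theta> z - g \<theta>' z) \<le> \<gamma> * norm (\<theta> - \<theta>')"
    and f_measurable: "(\<lambda>(\<theta>, z). f \<theta> z) \<in> borel_measurable (borel \<Otimes>\<^sub>M M)"
    and g_measurable: "(\<lambda>(\<theta>, z). g \<theta> z) \<in> borel \<Otimes>\<^sub>M M \<rightarrow>\<^sub>M borel"
begin

lemma radius_nonneg: "\<theta> \<in> \<Theta> \<Longrightarrow> R \<ge> 0"
  using Theta_ball by (meson mem_cball_0 norm_ge_zero order_trans subsetD)

lemma measurable_loss: "f \<theta> \<in> borel_measurable M"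
proof -
  have "(\<lambda>z. (\<theta>, z)) \<in> M \<rightarrow>\<^sub>M borel \<Otimes>\<^sub>M M" by measurable
  from measurable_compose[OF this f_measurable] show ?thesis by simp
qed

lemma integrable_loss:
  assumes "\<theta> \<in> \<Theta>"
  shows "integrable M (f \<theta>)"
proof -
  obtain z0 where z0: "z0 \<in> space M" using not_empty by blast
  have "\<bar>f \<theta> z\<bar> \<le> \<bar>f \<theta> z0\<bar> + B" if "z \<in> space M" for z
    using bounded_oscillation[OF assms that z0] bounded_oscillation[OF assms z0 that] by linarith
  then show ?thesis
    by (intro integrable_const_bound[where B="\<bar>f \<theta> z0\<bar> + B"] AE_I2 measurable_loss) auto
qed

lemma measurable_loss_minus_pop_risk:
  "(\<lambda>(\<theta>, y). f \<theta> y - pop_risk M f \<theta>) \<in> borel_measurable (borel \<Otimes>\<^sub>M M)"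
proof -
  have "pop_risk M f \<in> borel_measurable borel"
    unfolding pop_risk_def[abs_def] using f_measurable
    by (intro borel_measurable_lebesgue_integral) (simp add: case_prod_beta')
  then have "(\<lambda>p. pop_risk M f (fst p)) \<in> borel_measurable (borel \<Otimes>\<^sub>M M)"
    by (rule measurable_compose[OF measurable_fst])
  with f_measurable show ?thesis
    by (simp add: case_prod_beta' borel_measurable_diff)
qed

lemma integral_loss_minus_pop_risk:
  assumes "\<theta> \<in> \<Theta>"
  shows "(\<integral>y. f \<theta> y - pop_risk M f \<theta> \<partial>M) = 0"
  using integrable_loss[OF assms] by (simp add: pop_risk_def prob_space)

lemma abs_loss_minus_pop_risk_le:
  assumes "\<theta> \<in> \<Theta>" "y \<in> space M"
  shows "\<bar>f \<theta> y - pop_risk M f \<theta>\<bar> \<le> B"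
proof -
  have "f \<theta> y - pop_risk M f \<theta> = (\<integral>z. f \<theta> y - f \<theta> z \<partial>M)"
    using integrable_loss[OF assms(1)] by (simp add: pop_risk_def prob_space)
  also have "\<bar>\<dots>\<bar> \<le> B"
  proof (rule abs_integral_le_const)
    fix z assume "z \<in> space M"
    then show "\<bar>f \<theta> y - f \<theta> z\<bar> \<le> B"
      using bounded_oscillation[OF assms(1,2)] bounded_oscillation[OF assms(1) _ assms(2)]
      by (auto simp: abs_le_iff)
  qed
  finally show ?thesis .
qed

lemma abs_integral_loss_gap_le:
  assumes u: "u \<in> M \<rightarrow>\<^sub>M borel" and u_in: "\<And>y. y \<in> space M \<Longrightarrow> u y \<in> \<Theta>"
    and diam: "\<And>y z. y \<in> space M \<Longrightarrow> z \<in> space M \<Longrightarrow> norm (u y - u z) \<le> \<delta>"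
  shows "\<bar>\<integral>y. f (u y) y - pop_risk M f (u y) \<partial>M\<bar> \<le> L * \<delta>"
proof -
  interpret P: pair_prob_space M M by unfold_locales
  define \<phi> where "\<phi> \<theta> y = f \<theta> y - pop_risk M f \<theta>" for \<theta> y
  have meas: "(\<lambda>p. \<phi> (fst (h p)) (snd (h p))) \<in> borel_measurable (M \<Otimes>\<^sub>M M)"
    if "h \<in> M \<Otimes>\<^sub>M M \<rightarrow>\<^sub>M borel \<Otimes>\<^sub>M M" for h
    using measurable_compose[OF that measurable_loss_minus_pop_risk]
    by (simp add: \<phi>_def case_prod_beta')
  have bounded: "\<bar>\<phi> (u z) y\<bar> \<le> B" if "y \<in> space M" "z \<in> space M" for y z
    unfolding \<phi>_def using that u_in abs_loss_minus_pop_risk_le by blast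
  have "(\<lambda>p. (u (fst p), fst p)) \<in> M \<Otimes>\<^sub>M M \<rightarrow>\<^sub>M borel \<Otimes>\<^sub>M M"
    using u by measurable
  with bounded have int_diag: "integrable (M \<Otimes>\<^sub>M M) (\<lambda>p. \<phi> (u (fst p)) (fst p))"
    by (intro P.integrable_const_bound[where B=B] AE_I2) (auto dest: meas simp: space_pair_measure)
  have "(\<lambda>p. (u (snd p), fst p)) \<in> M \<Otimes>\<^sub>M M \<rightarrow>\<^sub>M borel \<Otimes>\<^sub>M M"
    using u by measurable
  with bounded have int_off: "integrable (M \<Otimes>\<^sub>M M) (\<lambda>p. \<phi> (u (snd p)) (fst p))"
    by (intro P.integrable_const_bound[where B=B] AE_I2) (auto dest: meas simp: space_pair_measure)
  have diag: "(\<integral>p. \<phi> (u (fst p)) (fst p) \<partial>(M \<Otimes>\<^sub>M M)) = (\<integral>y. \<phi> (u y) y \<partial>M)"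
    using P.integral_fst'[OF int_diag] by (simp add: prob_space)
  have off: "(\<integral>p. \<phi> (u (snd p)) (fst p) \<partial>(M \<Otimes>\<^sub>M M)) = 0"
  proof -
    have "(\<integral>p. \<phi> (u (snd p)) (fst p) \<partial>(M \<Otimes>\<^sub>M M)) = (\<integral>z. (\<integral>y. \<phi> (u z) y \<partial>M) \<partial>M)"
      using P.integral_snd[of "\<lambda>y z. \<phi> (u z) y"] int_off by (simp add: case_prod_beta')
    also have "\<dots> = (\<integral>z. 0 \<partial>M)"
      by (intro Bochner_Integration.integral_cong) (simp_all add: \<phi>_def u_in integral_loss_minus_pop_risk)
    finally show ?thesis by simp
  qed
  text \<open>Subtracting the mean-zero term \<open>\<phi> (u z) y\<close> and symmetrizing in \<open>(y, z)\<close> cancels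
    the population risks, leaving two instances of Assumption 1.\<close>
  have "(\<integral>y. \<phi> (u y) y \<partial>M) = (\<integral>p. \<phi> (u (fst p)) (fst p) - \<phi> (u (snd p)) (fst p) \<partial>(M \<Otimes>\<^sub>M M))"
    using int_diag int_off diag off by simp
  also have "\<bar>\<dots>\<bar> \<le> L * \<delta>"
  proof (rule abs_integral_le_of_symmetric_bound)
    fix y z assume yz: "y \<in> space M" "z \<in> space M"
    have "\<bar>f (u y) y - h0 (u y) - (f (u z) y - h0 (u z))\<bar> \<le> L * \<delta>"
      using shifted_lipschitz[OF u_in u_in, of y z y] diam[OF yz] yz L_nonneg
      by (meson mult_left_mono order_trans)
    moreover have "\<bar>f (u z) z - h0 (u z) - (f (u y) z - h0 (u y))\<bar> \<le> L * \<delta>"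
      using shifted_lipschitz[OF u_in u_in, of z y z] diam[OF yz(2,1)] yz L_nonneg
      by (meson mult_left_mono order_trans)
    ultimately show "\<bar>(\<phi> (u (fst (y, z))) (fst (y, z)) - \<phi> (u (snd (y, z))) (fst (y, z)))
        + (\<phi> (u (fst (z, y))) (fst (z, y)) - \<phi> (u (snd (z, y))) (fst (z, y)))\<bar> \<le> 2 * (L * \<delta>)"
      unfolding \<phi>_def by simp
  qed
  finally show ?thesis unfolding \<phi>_def .
qed

context
  fixes n :: nat and \<theta>0 :: 'a and "is" :: "nat list"
  assumes theta0: "\<theta>0 \<in> \<Theta>" and indices: "set is \<subseteq> {..<n}"
begin

abbreviation samples :: "(nat \<Rightarrow> 'b) measure"
  where "samples \<equiv> PiM {..<n} (\<lambda>_. M)"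

lemma prob_space_samples: "prob_space samples"
  by (intro prob_space_PiM) (simp add: prob_space_axioms)

lemma sample_in_space: "\<omega> \<in> space samples \<Longrightarrow> j \<in> set is \<Longrightarrow> \<omega> j \<in> space M"
  using indices by (auto simp: space_PiM PiE_iff)

lemma iterate_in_Theta: "\<omega> \<in> space samples \<Longrightarrow> iterate g \<theta>0 is \<omega> \<in> \<Theta>"
  using g_maps theta0 sample_in_space by (rule iterate_in)

lemma measurable_sample_gap:
  assumes "i < n"
  shows "(\<lambda>\<omega>. f (iterate g \<theta>0 is \<omega>) (\<omega> i) - pop_risk M f (iterate g \<theta>0 is \<omega>))
    \<in> borel_measurable samples"
proof -
  have "(\<lambda>\<omega>. (iterate g \<theta>0 is \<omega>, \<omega> i)) \<in> samples \<rightarrow>\<^sub>M borel \<Otimes>\<^sub>M M"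
    using measurable_iterate[OF g_measurable indices] assms
    by (intro measurable_Pair) auto
  from measurable_compose[OF this measurable_loss_minus_pop_risk] show ?thesis
    by simp
qed

lemma abs_sample_gap_le:
  "\<omega> \<in> space samples \<Longrightarrow> i < n \<Longrightarrow>
    \<bar>f (iterate g \<theta>0 is \<omega>) (\<omega> i) - pop_risk M f (iterate g \<theta>0 is \<omega>)\<bar> \<le> B"
  using abs_loss_minus_pop_risk_le iterate_in_Theta by (auto simp: space_PiM PiE_iff)

lemma integrable_sample_gap:
  assumes "i < n"
  shows "integrable samples
    (\<lambda>\<omega>. f (iterate g \<theta>0 is \<omega>) (\<omega> i) - pop_risk M f (iterate g \<theta>0 is \<omega>))"
proof -
  interpret S: prob_space samples by (rule prob_space_samples)
  show ?thesis
    using assms abs_sample_gap_le measurable_sample_gap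
    by (intro S.integrable_const_bound[where B=B] AE_I2) simp_all
qed

lemma abs_expected_sample_gap_le:
  assumes "i < n"
  shows "\<bar>\<integral>\<omega>. f (iterate g \<theta>0 is \<omega>) (\<omega> i) - pop_risk M f (iterate g \<theta>0 is \<omega>) \<partial>samples\<bar> \<le> B"
proof -
  interpret S: prob_space samples by (rule prob_space_samples)
  show ?thesis
    using assms abs_sample_gap_le by (intro S.abs_integral_le_const)
qed

lemma iterate_resample_dist_le:
  assumes late: "i \<notin> set (drop (length is - T) is)"
    and "\<omega> \<in> space samples" "\<omega>' \<in> space samples" and agree: "\<And>j. j \<noteq> i \<Longrightarrow> \<omega>' j = \<omega> j"
  shows "norm (iterate g \<theta>0 is \<omega> - iterate g \<theta>0 is \<omega>') \<le> \<gamma> ^ T * (2 * R)"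
  using g_maps contractive gamma_nonneg Theta_ball theta0
proof (rule iterate_forgets_early_samples)
  show "\<And>j. j \<in> set is \<Longrightarrow> \<omega> j \<in> space M" "\<And>j. j \<in> set is \<Longrightarrow> \<omega>' j \<in> space M"
    using assms(2,3) by (simp_all add: sample_in_space)
  show "\<And>j. j \<in> set (drop (length is - T) is) \<Longrightarrow> \<omega>' j = \<omega> j"
    using late agree by metis
qed

lemma abs_expected_sample_gap_le_stability:
  assumes i: "i < n" and late: "i \<notin> set (drop (length is - T) is)"
  shows "\<bar>\<integral>\<omega>. f (iterate g \<theta>0 is \<omega>) (\<omega> i) - pop_risk M f (iterate g \<theta>0 is \<omega>) \<partial>samples\<bar>
    \<le> L * (\<gamma> ^ T * (2 * R))"
proof -
  define I where "I = {..<n} - {i}"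
  have I: "{..<n} = insert i I" "i \<notin> I" "finite I"
    using i by (auto simp: I_def)
  interpret Rest: prob_space "PiM I (\<lambda>_. M)" by (intro prob_space_PiM) (simp add: prob_space_axioms)
  interpret Prod: product_prob_space "\<lambda>_::nat. M" by unfold_locales
  have "(\<integral>\<omega>. f (iterate g \<theta>0 is \<omega>) (\<omega> i) - pop_risk M f (iterate g \<theta>0 is \<omega>) \<partial>samples)
      = (\<integral>x. (\<integral>y. f (iterate g \<theta>0 is (x(i := y))) y - pop_risk M f (iterate g \<theta>0 is (x(i := y))) \<partial>M)
          \<partial>PiM I (\<lambda>_. M))"
    using Prod.product_integral_insert[OF I(3,2) integrable_sample_gap[OF i, unfolded I(1)]]
    unfolding I(1) by simp
  also have "\<bar>\<dots>\<bar> \<le> L * (\<gamma> ^ T * (2 * R))"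
  proof (rule Rest.abs_integral_le_const)
    fix x assume "x \<in> space (PiM I (\<lambda>_. M))"
    then have upd: "(\<lambda>y. x(i := y)) \<in> M \<rightarrow>\<^sub>M samples"
      using measurable_component_update I by metis
    then have in_space: "\<And>y. y \<in> space M \<Longrightarrow> x(i := y) \<in> space samples"
      by (rule measurable_space)
    show "\<bar>\<integral>y. f (iterate g \<theta>0 is (x(i := y))) y - pop_risk M f (iterate g \<theta>0 is (x(i := y))) \<partial>M\<bar>
        \<le> L * (\<gamma> ^ T * (2 * R))"
    proof (rule abs_integral_loss_gap_le)
      show "(\<lambda>y. iterate g \<theta>0 is (x(i := y))) \<in> M \<rightarrow>\<^sub>M borel"
        using measurable_compose[OF upd measurable_iterate[OF g_measurable indices]] .
      show "\<And>y. y \<in> space M \<Longrightarrow> iterate g \<theta>0 is (x(i := y)) \<in> \<Theta>"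
        using in_space iterate_in_Theta by blast
      show "\<And>y z. y \<in> space M \<Longrightarrow> z \<in> space M \<Longrightarrow>
          norm (iterate g \<theta>0 is (x(i := y)) - iterate g \<theta>0 is (x(i := z))) \<le> \<gamma> ^ T * (2 * R)"
        using iterate_resample_dist_le[OF late] in_space by simp
    qed
  qed
  finally show ?thesis .
qed

lemma abs_expected_generalization_gap_le:
  assumes n: "n \<ge> 1"
  shows "\<bar>\<integral>\<omega>. emp_risk n f \<omega> (iterate g \<theta>0 is \<omega>) - pop_risk M f (iterate g \<theta>0 is \<omega>) \<partial>samples\<bar>
    \<le> (B * real T + real n * (L * (\<gamma> ^ T * (2 * R)))) / real n"
proof -
  define gap where "gap i =
    (\<integral>\<omega>. f (iterate g \<theta>0 is \<omega>) (\<omega> i) - pop_risk M f (iterate g \<theta>0 is \<omega>) \<partial>samples)" for i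
  define D where "D = set (drop (length is - T) is)"
  have "(\<integral>\<omega>. emp_risk n f \<omega> (iterate g \<theta>0 is \<omega>) - pop_risk M f (iterate g \<theta>0 is \<omega>) \<partial>samples)
      = (\<integral>\<omega>. (\<Sum>i<n. f (iterate g \<theta>0 is \<omega>) (\<omega> i) - pop_risk M f (iterate g \<theta>0 is \<omega>)) / real n \<partial>samples)"
    using n by (intro Bochner_Integration.integral_cong) (simp_all add: emp_risk_def sum_subtractf field_simps)
  also have "\<dots> = (\<Sum>i<n. gap i) / real n"
    using integrable_sample_gap by (simp add: gap_def integral_sum)
  finally have gap_sum: "(\<integral>\<omega>. emp_risk n f \<omega> (iterate g \<theta>0 is \<omega>) - pop_risk M f (iterate g \<theta>0 is \<omega>) \<partial>samples)
      = (\<Sum>i<n. gap i) / real n" .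
  have "B \<ge> 0"
    using abs_expected_sample_gap_le[of 0] n unfolding gap_def by linarith
  have "\<bar>\<Sum>i<n. gap i\<bar> \<le> (\<Sum>i<n. \<bar>gap i\<bar>)"
    by (rule sum_abs)
  also have "\<dots> \<le> (\<Sum>i<n. (if i \<in> D then B else 0) + L * (\<gamma> ^ T * (2 * R)))"
  proof (rule sum_mono)
    fix i assume i: "i \<in> {..<n}"
    have nonneg: "L * (\<gamma> ^ T * (2 * R)) \<ge> 0"
      using L_nonneg gamma_nonneg radius_nonneg[OF theta0] by simp
    show "\<bar>gap i\<bar> \<le> (if i \<in> D then B else 0) + L * (\<gamma> ^ T * (2 * R))"
    proof (cases "i \<in> D")
      case True
      have "\<bar>gap i\<bar> \<le> B"
        using abs_expected_sample_gap_le i unfolding gap_def by simp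
      moreover have "(if i \<in> D then B else 0) = B"
        using True by simp
      ultimately show ?thesis
        using nonneg by linarith
    next
      case False
      then show ?thesis
        using abs_expected_sample_gap_le_stability[of i T] i unfolding gap_def D_def by simp
    qed
  qed
  also have "\<dots> = B * real (card ({..<n} \<inter> D)) + real n * (L * (\<gamma> ^ T * (2 * R)))"
    by (simp add: sum.distrib sum.inter_restrict[symmetric])
  also have "\<dots> \<le> B * real T + real n * (L * (\<gamma> ^ T * (2 * R)))"
  proof -
    have "card ({..<n} \<inter> D) \<le> T"
      using card_mono[of D "{..<n} \<inter> D"] card_length[of "drop (length is - T) is"]
      unfolding D_def by fastforce
    with \<open>B \<ge> 0\<close> show ?thesis
      by (simp add: mult_left_mono)
  qed
  finally show ?thesis
    unfolding gap_sum using n by (simp add: divide_right_mono)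
qed

end

end

theorem theorem8:
  fixes M :: "'b measure" and f :: "'a::euclidean_space \<Rightarrow> 'b \<Rightarrow> real"
    and g :: "'a \<Rightarrow> 'b \<Rightarrow> 'a" and \<Theta> :: "'a set"
    and R L B \<gamma> :: real and n :: nat and \<theta>0 :: 'a and "is" :: "nat list"
  assumes prob: "prob_space M"
    and n_pos: "n \<ge> 1"
    and Theta_ball: "\<Theta> \<subseteq> cball 0 R" and zero_in: "0 \<in> \<Theta>"
    and L_pos: "L > 0" and B_pos: "B > 0"
    and assm1: "\<exists>h0 :: 'a \<Rightarrow> real. \<forall>\<theta>\<in>\<Theta>. \<forall>\<theta>'\<in>\<Theta>. \<forall>z\<in>space M.
                  \<bar>f \<theta> z - h0 \<theta> - (f \<theta>' z - h0 \<theta>')\<bar> \<le> L * norm (\<theta> - \<theta>')"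
    and assm2: "\<forall>\<theta>\<in>\<Theta>. \<forall>z\<in>space M. \<forall>z'\<in>space M. f \<theta> z - f \<theta> z' \<le> B"
    and g_maps: "\<forall>\<theta>\<in>\<Theta>. \<forall>z\<in>space M. g \<theta> z \<in> \<Theta>"
    and gamma: "0 < \<gamma>" "\<gamma> < 1"
    and contr: "\<forall>z\<in>space M. \<forall>\<theta>\<in>\<Theta>. \<forall>\<theta>'\<in>\<Theta>. norm (g \<theta> z - g \<theta>' z) \<le> \<gamma> * norm (\<theta> - \<theta>')"
    and f_meas: "(\<lambda>(\<theta>, z). f \<theta> z) \<in> borel_measurable (borel \<Otimes>\<^sub>M M)"
    and g_meas: "(\<lambda>(\<theta>, z). g \<theta> z) \<in> (borel \<Otimes>\<^sub>M M) \<rightarrow>\<^sub>M borel"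
    and theta0: "\<theta>0 \<in> \<Theta>"
    and idx: "set is \<subseteq> {..<n}"
  shows "\<bar>\<integral>\<omega>. emp_risk n f \<omega> (iterate g \<theta>0 is \<omega>) - pop_risk M f (iterate g \<theta>0 is \<omega>)
            \<partial>(PiM {..<n} (\<lambda>_. M))\<bar>
         \<le> (B * real_of_int (max \<lceil>ln (2 * L * R * real n) / ln (1 / \<gamma>)\<rceil> 0) + 1) / real n"
proof -
  obtain h0 where h0: "\<forall>\<theta>\<in>\<Theta>. \<forall>\<theta>'\<in>\<Theta>. \<forall>z\<in>space M.
      \<bar>f \<theta> z - h0 \<theta> - (f \<theta>' z - h0 \<theta>')\<bar> \<le> L * norm (\<theta> - \<theta>')"
    using assm1 by blast
  interpret contractive_loss_setting M f h0 g \<Theta> R L B \<gamma>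
    using prob Theta_ball h0 L_pos assm2 g_maps gamma contr f_meas g_meas
    by (intro contractive_loss_setting.intro contractive_loss_setting_axioms.intro) auto
  define T where "T = nat (max \<lceil>ln (2 * L * R * real n) / ln (1 / \<gamma>)\<rceil> 0)"
  have "real n * (L * (\<gamma> ^ T * (2 * R))) \<le> 1"
  proof (cases "R = 0")
    case False
    then have "R > 0" using radius_nonneg[OF theta0] by simp
    then have "\<gamma> ^ T \<le> 1 / (2 * L * R * real n)"
      unfolding T_def using L_pos n_pos gamma by (intro power_ceiling_log_le) auto
    then have "real n * (L * (\<gamma> ^ T * (2 * R))) \<le> real n * (L * (1 / (2 * L * R * real n) * (2 * R)))"
      using L_pos \<open>R > 0\<close> by (intro mult_left_mono mult_right_mono) auto
    also have "\<dots> = 1"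
      using L_pos \<open>R > 0\<close> n_pos by (simp add: field_simps)
    finally show ?thesis .
  qed simp
  then have "(B * real T + real n * (L * (\<gamma> ^ T * (2 * R)))) / real n \<le> (B * real T + 1) / real n"
    by (simp add: divide_right_mono)
  with abs_expected_generalization_gap_le[OF theta0 idx n_pos, of T] show ?thesis
    unfolding T_def by simp
qed

end
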